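(* Let $\mathcal{F}$ be an $N$-dimensional commutative algebra with basis $e_1,\dots,e_N$ and structure constants $a^k_{ij}$, such that $e_1$ is a unity element and $\mathcal{F}$ carries a non-degenerate symmetric inner product $\langle\,,\rangle$ with components $\eta_{ij}$ satisfying the Frobenius condition $\langle a\circ b,c\rangle=\langle a,b\circ c\rangle$. Define $h^{(1)}=\eta_{1p}u^p$ and recursively $h^{(n+1)}=a^i_{jk}u^ju^k\,\partial h^{(n)}/\partial u^i$ for $n\ge1$. Then $\mathcal{F}$ is a Jordan algebra if and only if $h^{(n)}$ is a conserved density for every $n\ge 1$.
   Context: Summation over repeated indices is understood; indices are raised and lowered with $\eta_{ij}$ and its inverse. A conserved density is a function $h(u^1,\dots,u^N)$ satisfying, for all $k,p$, $a^i_{jk}u^j\,\partial^2 h/\partial u^i\partial u^p=a^i_{jp}u^j\,\partial^2 h/\partial u^i\partial u^k$. A commutative algebra is Jordan if $(x\circ y)\circ(x\circ x)=x\circ(y\circ(x\circ x))$ for all $x,y$. *)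

theory Defs
  imports "HOL-Analysis.Analysis"
begin

text \<open>Structure constants: a k i j stands for a^k_{ij} (upper index first).
  Coordinates u = (u^1,...,u^N) are vectors real^'n; the basis index set is the finite type 'n.\<close>

definition alg_mult :: "('n::finite \<Rightarrow> 'n \<Rightarrow> 'n \<Rightarrow> real) \<Rightarrow> real^'n \<Rightarrow> real^'n \<Rightarrow> real^'n" where
  "alg_mult a x y = (\<chi> k. \<Sum>i\<in>UNIV. \<Sum>j\<in>UNIV. a k i j * x$i * y$j)"

definition is_jordan :: "('n::finite \<Rightarrow> 'n \<Rightarrow> 'n \<Rightarrow> real) \<Rightarrow> bool" where
  "is_jordan a \<longleftrightarrow> (\<forall>x y. alg_mult a (alg_mult a x y) (alg_mult a x x)
                       = alg_mult a x (alg_mult a y (alg_mult a x x)))"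

definition pdiff :: "'n::finite \<Rightarrow> (real^'n \<Rightarrow> real) \<Rightarrow> real^'n \<Rightarrow> real" where
  "pdiff i f u = deriv (\<lambda>t. f (u + t *\<^sub>R axis i 1)) 0"

definition conserved_density :: "('n::finite \<Rightarrow> 'n \<Rightarrow> 'n \<Rightarrow> real) \<Rightarrow> (real^'n \<Rightarrow> real) \<Rightarrow> bool" where
  "conserved_density a h \<longleftrightarrow> (\<forall>u k p.
     (\<Sum>i\<in>UNIV. \<Sum>j\<in>UNIV. a i j k * u$j * pdiff i (pdiff p h) u)
   = (\<Sum>i\<in>UNIV. \<Sum>j\<in>UNIV. a i j p * u$j * pdiff i (pdiff k h) u))"

text \<open>The densities h^(n), n \<ge> 1 (h^(0) is an unused dummy).\<close>
fun hdens :: "('n::finite \<Rightarrow> 'n \<Rightarrow> 'n \<Rightarrow> real) \<Rightarrow> ('n \<Rightarrow> 'n \<Rightarrow> real) \<Rightarrow> 'n \<Rightarrow> nat \<Rightarrow> real^'n \<Rightarrow> real" where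
  "hdens a \<eta> e1 0 = (\<lambda>u. 0)"
| "hdens a \<eta> e1 (Suc 0) = (\<lambda>u. \<Sum>p\<in>UNIV. \<eta> e1 p * u$p)"
| "hdens a \<eta> e1 (Suc (Suc n)) = (\<lambda>u. \<Sum>i\<in>UNIV. \<Sum>j\<in>UNIV. \<Sum>k\<in>UNIV.
        a i j k * u$j * u$k * pdiff i (hdens a \<eta> e1 (Suc n)) u)"

end

theory Submission
  imports Defs
begin

(* Write e for the unit, L_u for multiplication by u, and e_k for axis k 1.  The Frobenius
   condition makes every L_u self-adjoint, and h^(n+1) is the derivative of h^(n) along the
   vector field u o u.

   In a Jordan algebra h^(n+1)(u) = n! <e, u^(n+1)>, whose gradient is (n+1)! u^n.  The
   linearized Jordan identity shows by strong induction that L_u commutes with every L_(u^k),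
   hence with the derivative P_n(u, -) of u |-> u^n; P_n(u, -) is moreover self-adjoint.  So the
   Hessian of h^(n+1) evaluated at (u o e_k, e_p) equals (n+1)! <P_n(u, u o e_k), e_p>, which is
   symmetric in k and p: this is exactly the conservation condition.

   Conversely h^(4) = 6 <u o u, u o u> in every commutative Frobenius algebra, and its
   conservation condition says <(u o u) o (u o e_k) - u o ((u o u) o e_k), e_p> = 0 for all p;
   by nondegeneracy of the form this is the Jordan identity applied to the basis vectors. *)

definition inner_form :: "('n::finite \<Rightarrow> 'n \<Rightarrow> real) \<Rightarrow> real^'n \<Rightarrow> real^'n \<Rightarrow> real" where
  "inner_form \<eta> x y = (\<Sum>i\<in>UNIV. \<Sum>j\<in>UNIV. \<eta> i j * x$i * y$j)"

interpretation alg_mult: bounded_bilinear "alg_mult a" for a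
proof -
  have "bilinear (alg_mult a)"
    by (auto simp: bilinear_def alg_mult_def vec_eq_iff sum.distrib sum_distrib_left algebra_simps
        intro!: linearI)
  then show "bounded_bilinear (alg_mult a)"
    by (simp add: bilinear_conv_bounded_bilinear)
qed

interpretation inner_form: bounded_bilinear "inner_form \<eta>" for \<eta>
proof -
  have "bilinear (inner_form \<eta>)"
    by (auto simp: bilinear_def inner_form_def sum.distrib sum_distrib_left algebra_simps
        intro!: linearI)
  then show "bounded_bilinear (inner_form \<eta>)"
    by (simp add: bilinear_conv_bounded_bilinear)
qed

lemma sum_swap3:
  "(\<Sum>a\<in>A. \<Sum>b\<in>B. \<Sum>c\<in>C. f a b c) = (\<Sum>b\<in>B. \<Sum>c\<in>C. \<Sum>a\<in>A. f a b c)"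
  by (subst sum.swap) (rule sum.cong[OF refl], rule sum.swap)

lemma alg_mult_axis_nth: "alg_mult a x (axis k 1) $ i = (\<Sum>j\<in>UNIV. a i j k * x$j)"
  by (simp add: alg_mult_def axis_def if_distrib cong: if_cong)

lemma inner_form_axis_left: "inner_form \<eta> (axis k 1) y = (\<Sum>j\<in>UNIV. \<eta> k j * y$j)"
proof -
  have "inner_form \<eta> (axis k 1) y = (\<Sum>i\<in>UNIV. axis k 1 $ i * (\<Sum>j\<in>UNIV. \<eta> i j * y$j))"
    by (simp add: inner_form_def sum_distrib_left mult_ac)
  then show ?thesis
    by (simp add: axis_def if_distrib if_distribR cong: if_cong)
qed

lemma inner_form_nondegenerate:
  fixes \<eta> :: "'n::finite \<Rightarrow> 'n \<Rightarrow> real"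
  assumes "det (\<chi> i j. \<eta> i j) \<noteq> 0" and "\<And>p. inner_form \<eta> v (axis p 1) = 0"
  shows "v = 0"
proof -
  let ?H = "(\<chi> i j. \<eta> i j) :: real^'n^'n"
  have "(transpose ?H *v v)$p = inner_form \<eta> v (axis p 1)" for p
    by (simp add: inner_form_def matrix_vector_mult_def transpose_def axis_def if_distrib mult.commute
        cong: if_cong)
  then have "transpose ?H *v v = 0"
    using assms(2) by (simp add: vec_eq_iff)
  moreover have "invertible (transpose ?H)"
    using assms(1) by (simp add: invertible_det_nz det_transpose)
  ultimately show "v = 0"
    using matrix_left_invertible_ker invertible_def by blast
qed

lemma sum_axis_linear:
  fixes F :: "real^'n::finite \<Rightarrow> real"
  assumes "linear F"
  shows "(\<Sum>i\<in>UNIV. v$i * F (axis i 1)) = F v"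
proof -
  have "F v = F (\<Sum>i\<in>UNIV. v$i *\<^sub>R axis i 1)"
    using basis_expansion[of v] by (simp add: scalar_mult_eq_scaleR)
  also have "\<dots> = (\<Sum>i\<in>UNIV. v$i * F (axis i 1))"
    using assms by (simp add: linear_sum linear_scale)
  finally show ?thesis by simp
qed

lemma pdiff_eq_derivative:
  assumes "(f has_derivative f') (at u)"
  shows "pdiff i f u = f' (axis i 1)"
proof -
  have "((\<lambda>t. u + t *\<^sub>R axis i 1) has_derivative (\<lambda>t. t *\<^sub>R axis i 1)) (at 0)"
    by (auto intro!: derivative_eq_intros)
  from has_derivative_compose[OF this] assms
  have "((\<lambda>t. f (u + t *\<^sub>R axis i 1)) has_derivative (\<lambda>t. f' (t *\<^sub>R axis i 1))) (at 0)"
    by simp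
  moreover have "(\<lambda>t. f' (t *\<^sub>R axis i 1)) = (*) (f' (axis i 1))"
    using assms by (simp add: has_derivative_linear linear_scale fun_eq_iff mult.commute)
  ultimately have "((\<lambda>t. f (u + t *\<^sub>R axis i 1)) has_field_derivative f' (axis i 1)) (at 0)"
    by (simp add: has_field_derivative_def)
  then show ?thesis
    unfolding pdiff_def by (rule DERIV_imp_deriv)
qed

lemma sum_pdiff_eq_derivative:
  assumes "(f has_derivative f') (at u)"
  shows "(\<Sum>i\<in>UNIV. v$i * pdiff i f u) = f' v"
  using assms by (simp add: pdiff_eq_derivative sum_axis_linear has_derivative_linear)

lemma hdens_Suc_Suc_eq_derivative:
  assumes "(hdens a \<eta> e1 (Suc n) has_derivative D) (at u)"
  shows "hdens a \<eta> e1 (Suc (Suc n)) u = D (alg_mult a u u)"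
proof -
  have "hdens a \<eta> e1 (Suc (Suc n)) u
      = (\<Sum>i\<in>UNIV. (alg_mult a u u)$i * pdiff i (hdens a \<eta> e1 (Suc n)) u)"
    by (simp add: alg_mult_def sum_distrib_right)
  also have "\<dots> = D (alg_mult a u u)"
    by (rule sum_pdiff_eq_derivative[OF assms])
  finally show ?thesis .
qed

lemma conserved_density_iff_derivatives:
  assumes "\<And>p u. (pdiff p h has_derivative H p u) (at u)"
  shows "conserved_density a h \<longleftrightarrow>
    (\<forall>u k p. H p u (alg_mult a u (axis k 1)) = H k u (alg_mult a u (axis p 1)))"
proof -
  have "(\<Sum>i\<in>UNIV. \<Sum>j\<in>UNIV. a i j k * u$j * pdiff i (pdiff p h) u)
      = H p u (alg_mult a u (axis k 1))" for u k p
  proof -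
    have "(\<Sum>i\<in>UNIV. \<Sum>j\<in>UNIV. a i j k * u$j * pdiff i (pdiff p h) u)
        = (\<Sum>i\<in>UNIV. (alg_mult a u (axis k 1))$i * pdiff i (pdiff p h) u)"
      by (simp add: alg_mult_axis_nth sum_distrib_right)
    also have "\<dots> = H p u (alg_mult a u (axis k 1))"
      by (rule sum_pdiff_eq_derivative[OF assms])
    finally show ?thesis .
  qed
  then show ?thesis
    unfolding conserved_density_def by simp
qed

locale comm_unital_algebra =
  fixes a :: "'n::finite \<Rightarrow> 'n \<Rightarrow> 'n \<Rightarrow> real" and e1 :: 'n
  assumes comm: "\<forall>k i j. a k i j = a k j i"
    and unity: "\<forall>k j. a k e1 j = (if k = j then 1 else 0)"
begin

abbreviation mult :: "real^'n \<Rightarrow> real^'n \<Rightarrow> real^'n" (infixl "\<odot>" 70)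
  where "x \<odot> y \<equiv> alg_mult a x y"

abbreviation one_vec :: "real^'n" ("\<one>")
  where "\<one> \<equiv> axis e1 1"

lemma mult_commute: "x \<odot> y = y \<odot> x"
  unfolding alg_mult_def vec_eq_iff by (simp, subst sum.swap, simp add: comm mult_ac)

lemma mult_one_right [simp]: "y \<odot> \<one> = y"
proof -
  have "(y \<odot> \<one>)$k = (\<Sum>j\<in>UNIV. y$j * a k e1 j)" for k
    by (simp add: alg_mult_axis_nth comm[rule_format, of k _ e1] mult.commute[of "a k e1 _"])
  then show ?thesis
    by (simp add: vec_eq_iff unity if_distrib cong: if_cong)
qed

lemma mult_one_left [simp]: "\<one> \<odot> y = y"
  using mult_commute mult_one_right by metis

primrec pow :: "real^'n \<Rightarrow> nat \<Rightarrow> real^'n" where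
  "pow u 0 = \<one>"
| "pow u (Suc k) = u \<odot> pow u k"

primrec pow_deriv :: "nat \<Rightarrow> real^'n \<Rightarrow> real^'n \<Rightarrow> real^'n" where
  "pow_deriv 0 u y = 0"
| "pow_deriv (Suc k) u y = y \<odot> pow u k + u \<odot> pow_deriv k u y"

lemma has_derivative_pow: "((\<lambda>u. pow u k) has_derivative pow_deriv k u) (at u)"
proof (induction k)
  case 0
  then show ?case by simp
next
  case (Suc k)
  show ?case
    unfolding pow.simps
    by (rule has_derivative_eq_rhs[OF alg_mult.FDERIV[OF has_derivative_ident Suc]])
      (simp add: fun_eq_iff add.commute)
qed

lemma pow_deriv_self: "pow_deriv k u u = real k *\<^sub>R pow u k"
  by (induction k) (simp_all add: alg_mult.add_right alg_mult.scaleR_right mult_commute algebra_simps)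

lemma is_jordan_iff: "is_jordan a \<longleftrightarrow> (\<forall>u y. (u \<odot> u) \<odot> (u \<odot> y) = u \<odot> ((u \<odot> u) \<odot> y))"
  unfolding is_jordan_def by (metis mult_commute)

end

locale jordan_algebra = comm_unital_algebra +
  assumes jordan: "is_jordan a"
begin

lemma square_mult_commute: "(u \<odot> u) \<odot> (u \<odot> y) = u \<odot> ((u \<odot> u) \<odot> y)"
  using jordan is_jordan_iff by blast

lemma jordan_linearized:
  "(w \<odot> (x \<odot> x)) \<odot> z
    = (x \<odot> x) \<odot> (w \<odot> z) + 2 *\<^sub>R ((x \<odot> w) \<odot> (x \<odot> z)) - 2 *\<^sub>R (x \<odot> (w \<odot> (x \<odot> z)))"
proof -
  define J where "J x y = (x \<odot> y) \<odot> (x \<odot> x) - x \<odot> (y \<odot> (x \<odot> x))" for x y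
  have J_0: "J x y = 0" for x y
    using jordan unfolding is_jordan_def J_def by simp
  define B where "B = (z \<odot> w) \<odot> (x \<odot> x) + (x \<odot> w) \<odot> (x \<odot> z) + (x \<odot> w) \<odot> (x \<odot> z)
    - z \<odot> (w \<odot> (x \<odot> x)) - x \<odot> (w \<odot> (x \<odot> z)) - x \<odot> (w \<odot> (x \<odot> z))"
  have "J (x + z) w - J (x - z) w = B + B + J z w + J z w"
    unfolding J_def B_def
    by (simp only: alg_mult.add_left alg_mult.add_right alg_mult.diff_left alg_mult.diff_right
        mult_commute[of z x] mult_commute[of w x] mult_commute[of w z]) (simp add: algebra_simps)
  then have "B = 0"
    using J_0 by (simp add: vec_eq_iff)
  moreover have "(w \<odot> (x \<odot> x)) \<odot> z
    = (x \<odot> x) \<odot> (w \<odot> z) + ((x \<odot> w) \<odot> (x \<odot> z) + (x \<odot> w) \<odot> (x \<odot> z))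
      - (x \<odot> (w \<odot> (x \<odot> z)) + x \<odot> (w \<odot> (x \<odot> z))) - B"
    unfolding B_def
    by (simp add: mult_commute[of "w \<odot> (x \<odot> x)" z] mult_commute[of z w] mult_commute[of "w \<odot> z"]
        algebra_simps)
  ultimately show ?thesis
    by (simp add: scaleR_2)
qed

lemma square_mult_pow: "(u \<odot> u) \<odot> pow u k = pow u (Suc (Suc k))"
proof (induction k)
  case 0
  then show ?case by simp
next
  case (Suc k)
  then show ?case
    using square_mult_commute[of u "pow u k"] by simp
qed

lemma pow_mult_commute: "pow u k \<odot> (u \<odot> y) = u \<odot> (pow u k \<odot> y)"
proof (induction k arbitrary: y rule: less_induct)
  case (less k)
  consider "k = 0" | "k = 1" | j where "k = Suc (Suc j)"
    by (metis One_nat_def not0_implies_Suc)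
  then show ?case
  proof cases
    case 3
    let ?p = "pow u j" and ?q = "u \<odot> u"
    have IH: "?p \<odot> (u \<odot> z) = u \<odot> (?p \<odot> z)" "pow u (Suc j) \<odot> (u \<odot> z) = u \<odot> (pow u (Suc j) \<odot> z)"
      for z using less.IH[of j] less.IH[of "Suc j"] 3 by simp_all
    have pow_k: "pow u k = ?p \<odot> ?q"
      using 3 square_mult_pow[of u j] mult_commute by metis
    have expand: "pow u k \<odot> z
        = ?q \<odot> (?p \<odot> z) + 2 *\<^sub>R (pow u (Suc j) \<odot> (u \<odot> z)) - 2 *\<^sub>R (u \<odot> (?p \<odot> (u \<odot> z)))" for z
      using jordan_linearized[of ?p u z] by (simp add: pow_k)
    have "pow u k \<odot> (u \<odot> y)
        = ?q \<odot> (?p \<odot> (u \<odot> y)) + 2 *\<^sub>R (pow u (Suc j) \<odot> (u \<odot> (u \<odot> y)))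
          - 2 *\<^sub>R (u \<odot> (?p \<odot> (u \<odot> (u \<odot> y))))"
      by (rule expand)
    also have "\<dots> = u \<odot> (?q \<odot> (?p \<odot> y)) + 2 *\<^sub>R (u \<odot> (pow u (Suc j) \<odot> (u \<odot> y)))
          - 2 *\<^sub>R (u \<odot> (u \<odot> (?p \<odot> (u \<odot> y))))"
      by (simp only: IH square_mult_commute)
    also have "\<dots> = u \<odot> (pow u k \<odot> y)"
      by (simp only: expand alg_mult.add_right alg_mult.diff_right alg_mult.scaleR_right)
    finally show ?thesis .
  qed simp_all
qed

lemma pow_deriv_mult_commute: "pow_deriv k u (u \<odot> y) = u \<odot> pow_deriv k u y"
  by (induction k)
    (simp_all add: alg_mult.zero_right alg_mult.add_right pow_mult_commute mult_commute[of _ "pow u _"])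

end

locale frobenius_algebra = comm_unital_algebra a e1
    for a :: "'n::finite \<Rightarrow> 'n \<Rightarrow> 'n \<Rightarrow> real" and e1 :: 'n +
  fixes \<eta> :: "'n \<Rightarrow> 'n \<Rightarrow> real"
  assumes sym: "\<forall>i j. \<eta> i j = \<eta> j i"
    and frob: "\<forall>i j k. (\<Sum>l\<in>UNIV. a l i j * \<eta> l k) = (\<Sum>l\<in>UNIV. \<eta> i l * a l j k)"
begin

abbreviation form :: "real^'n \<Rightarrow> real^'n \<Rightarrow> real" ("\<langle>_, _\<rangle>")
  where "\<langle>x, y\<rangle> \<equiv> inner_form \<eta> x y"

lemma form_commute: "\<langle>x, y\<rangle> = \<langle>y, x\<rangle>"
  unfolding inner_form_def by (subst sum.swap) (simp add: sym mult_ac)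

lemma form_mult_assoc: "\<langle>x \<odot> y, z\<rangle> = \<langle>x, y \<odot> z\<rangle>"
proof -
  have "\<langle>x \<odot> y, z\<rangle>
      = (\<Sum>l\<in>UNIV. \<Sum>k\<in>UNIV. \<Sum>i\<in>UNIV. \<Sum>j\<in>UNIV. x$i * y$j * z$k * (a l i j * \<eta> l k))"
    by (simp add: inner_form_def alg_mult_def sum_distrib_left sum_distrib_right mult_ac)
  also have "\<dots> = (\<Sum>k\<in>UNIV. \<Sum>i\<in>UNIV. \<Sum>l\<in>UNIV. \<Sum>j\<in>UNIV. x$i * y$j * z$k * (a l i j * \<eta> l k))"
    by (rule sum_swap3)
  also have "\<dots> = (\<Sum>k\<in>UNIV. \<Sum>i\<in>UNIV. \<Sum>j\<in>UNIV. \<Sum>l\<in>UNIV. x$i * y$j * z$k * (a l i j * \<eta> l k))"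
    by (rule sum.cong[OF refl], rule sum.cong[OF refl], rule sum.swap)
  also have "\<dots> = (\<Sum>i\<in>UNIV. \<Sum>j\<in>UNIV. \<Sum>k\<in>UNIV. \<Sum>l\<in>UNIV. x$i * y$j * z$k * (a l i j * \<eta> l k))"
    by (rule sum_swap3)
  also have "\<dots> = (\<Sum>i\<in>UNIV. \<Sum>j\<in>UNIV. \<Sum>k\<in>UNIV. \<Sum>l\<in>UNIV. x$i * y$j * z$k * (\<eta> i l * a l j k))"
    using frob by (simp add: sum_distrib_left[symmetric])
  also have "\<dots> = (\<Sum>i\<in>UNIV. \<Sum>l\<in>UNIV. \<Sum>j\<in>UNIV. \<Sum>k\<in>UNIV. x$i * y$j * z$k * (\<eta> i l * a l j k))"
    by (rule sum.cong[OF refl], rule sum_swap3[symmetric])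
  also have "\<dots> = \<langle>x, y \<odot> z\<rangle>"
    by (simp add: inner_form_def alg_mult_def sum_distrib_left sum_distrib_right mult_ac)
  finally show ?thesis .
qed

lemma form_mult_left: "\<langle>u \<odot> x, y\<rangle> = \<langle>x, u \<odot> y\<rangle>"
  by (metis form_mult_assoc mult_commute)

lemma form_one_mult: "\<langle>\<one>, x \<odot> y\<rangle> = \<langle>x, y\<rangle>"
  using form_mult_assoc[of \<one> x y] by simp

lemma hdens_1: "hdens a \<eta> e1 (Suc 0) = (\<lambda>u. \<langle>\<one>, u\<rangle>)"
  by (simp add: fun_eq_iff inner_form_axis_left)

lemma has_derivative_square: "((\<lambda>u. u \<odot> u) has_derivative (\<lambda>h. 2 *\<^sub>R (u \<odot> h))) (at u)"
  by (rule has_derivative_eq_rhs[OF alg_mult.FDERIV[OF has_derivative_ident has_derivative_ident]])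
    (simp add: fun_eq_iff mult_commute[of _ u] scaleR_2)

lemma hdens_4: "hdens a \<eta> e1 4 = (\<lambda>u. 6 * \<langle>u \<odot> u, u \<odot> u\<rangle>)"
proof -
  have h2: "hdens a \<eta> e1 2 = (\<lambda>u. \<langle>u, u\<rangle>)"
  proof
    fix u
    have "(hdens a \<eta> e1 (Suc 0) has_derivative (\<lambda>y. \<langle>\<one>, y\<rangle>)) (at u)"
      unfolding hdens_1 by (rule bounded_linear_imp_has_derivative[OF inner_form.bounded_linear_right])
    from hdens_Suc_Suc_eq_derivative[OF this]
    show "hdens a \<eta> e1 2 u = \<langle>u, u\<rangle>"
      by (simp add: numeral_2_eq_2 form_one_mult)
  qed
  have h3: "hdens a \<eta> e1 3 = (\<lambda>u. 2 * \<langle>u \<odot> u, u\<rangle>)"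
  proof
    fix u
    have "(hdens a \<eta> e1 (Suc (Suc 0)) has_derivative (\<lambda>y. \<langle>u, y\<rangle> + \<langle>y, u\<rangle>)) (at u)"
      unfolding h2[unfolded numeral_2_eq_2]
      by (rule inner_form.FDERIV[OF has_derivative_ident has_derivative_ident])
    from hdens_Suc_Suc_eq_derivative[OF this]
    show "hdens a \<eta> e1 3 u = 2 * \<langle>u \<odot> u, u\<rangle>"
      by (simp add: numeral_3_eq_3 form_commute[of u])
  qed
  show ?thesis
  proof
    fix u
    have rotate: "\<langle>u \<odot> y, u\<rangle> = \<langle>u \<odot> u, y\<rangle>" for y
      by (metis form_mult_left form_commute)
    have "(hdens a \<eta> e1 (Suc (Suc (Suc 0))) has_derivative (\<lambda>y. 6 * \<langle>u \<odot> u, y\<rangle>)) (at u)"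
      unfolding h3[unfolded numeral_3_eq_3]
      by (rule has_derivative_eq_rhs[OF has_derivative_mult_right[OF
            inner_form.FDERIV[OF has_derivative_square has_derivative_ident]]])
        (simp add: fun_eq_iff inner_form.scaleR_left rotate)
    from hdens_Suc_Suc_eq_derivative[OF this]
    show "hdens a \<eta> e1 4 u = 6 * \<langle>u \<odot> u, u \<odot> u\<rangle>"
      by (simp add: numeral_eq_Suc)
  qed
qed

lemma pdiff_hdens_4: "pdiff q (hdens a \<eta> e1 4) = (\<lambda>u. 24 * \<langle>u \<odot> u, u \<odot> axis q 1\<rangle>)"
proof
  fix u
  have "(hdens a \<eta> e1 4 has_derivative (\<lambda>h. 24 * \<langle>u \<odot> u, u \<odot> h\<rangle>)) (at u)"
    unfolding hdens_4
    by (rule has_derivative_eq_rhs[OF has_derivative_mult_right[OF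
          inner_form.FDERIV[OF has_derivative_square has_derivative_square]]])
      (simp add: fun_eq_iff inner_form.scaleR_left inner_form.scaleR_right form_commute)
  then show "pdiff q (hdens a \<eta> e1 4) u = 24 * \<langle>u \<odot> u, u \<odot> axis q 1\<rangle>"
    by (rule pdiff_eq_derivative)
qed

lemma has_derivative_pdiff_hdens_4:
  "(pdiff q (hdens a \<eta> e1 4) has_derivative
     (\<lambda>w. 24 * (\<langle>u \<odot> u, w \<odot> axis q 1\<rangle> + 2 * \<langle>u \<odot> w, u \<odot> axis q 1\<rangle>))) (at u)"
  unfolding pdiff_hdens_4
  by (rule has_derivative_eq_rhs[OF has_derivative_mult_right[OF inner_form.FDERIV[OF
        has_derivative_square alg_mult.FDERIV[OF has_derivative_ident has_derivative_const]]]])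
    (simp add: fun_eq_iff alg_mult.zero_right inner_form.scaleR_left)

lemma jordan_if_conserved_hdens_4:
  assumes nondeg: "det (\<chi> i j. \<eta> i j) \<noteq> 0"
    and conserved: "conserved_density a (hdens a \<eta> e1 4)"
  shows "is_jordan a"
proof -
  let ?e = "\<lambda>k. axis k 1 :: real^'n"
  have "\<langle>(u \<odot> u) \<odot> (u \<odot> ?e k) - u \<odot> ((u \<odot> u) \<odot> ?e k), ?e p\<rangle> = 0" for u k p
  proof -
    have "24 * (\<langle>u \<odot> u, (u \<odot> ?e k) \<odot> ?e p\<rangle> + 2 * \<langle>u \<odot> (u \<odot> ?e k), u \<odot> ?e p\<rangle>)
        = 24 * (\<langle>u \<odot> u, (u \<odot> ?e p) \<odot> ?e k\<rangle> + 2 * \<langle>u \<odot> (u \<odot> ?e p), u \<odot> ?e k\<rangle>)"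
      using conserved unfolding conserved_density_iff_derivatives[OF has_derivative_pdiff_hdens_4]
      by blast
    moreover have "\<langle>u \<odot> (u \<odot> ?e k), u \<odot> ?e p\<rangle> = \<langle>u \<odot> (u \<odot> ?e p), u \<odot> ?e k\<rangle>"
      by (metis form_mult_left form_commute)
    moreover have "\<langle>u \<odot> u, (u \<odot> ?e k) \<odot> ?e p\<rangle> = \<langle>(u \<odot> u) \<odot> (u \<odot> ?e k), ?e p\<rangle>"
      by (rule form_mult_assoc[symmetric])
    moreover have "\<langle>u \<odot> u, (u \<odot> ?e p) \<odot> ?e k\<rangle> = \<langle>u \<odot> ((u \<odot> u) \<odot> ?e k), ?e p\<rangle>"
      by (metis form_mult_assoc form_mult_left mult_commute)
    ultimately show ?thesis
      by (simp add: inner_form.diff_left)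
  qed
  then have "(u \<odot> u) \<odot> (u \<odot> ?e k) = u \<odot> ((u \<odot> u) \<odot> ?e k)" for u k
    using inner_form_nondegenerate[OF nondeg] by (metis eq_iff_diff_eq_0)
  then have "(\<lambda>y. (u \<odot> u) \<odot> (u \<odot> y)) = (\<lambda>y. u \<odot> ((u \<odot> u) \<odot> y))" for u
    by (intro linear_eq_stdbasis bounded_linear.linear
        bounded_linear_compose[OF alg_mult.bounded_linear_right alg_mult.bounded_linear_right])
      (auto simp: Basis_vec_def)
  then show ?thesis
    unfolding is_jordan_iff by metis
qed

end

locale frobenius_jordan_algebra = frobenius_algebra a e1 \<eta> + jordan_algebra a e1
  for a :: "'n::finite \<Rightarrow> 'n \<Rightarrow> 'n \<Rightarrow> real" and e1 :: 'n and \<eta> :: "'n \<Rightarrow> 'n \<Rightarrow> real"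
begin

lemma form_pow_deriv_commute: "\<langle>pow_deriv k u x, y\<rangle> = \<langle>x, pow_deriv k u y\<rangle>"
proof (induction k arbitrary: x y)
  case 0
  show ?case
    by (simp add: inner_form.zero_left inner_form.zero_right)
next
  case (Suc k)
  have "\<langle>pow_deriv (Suc k) u x, y\<rangle> = \<langle>x \<odot> pow u k, y\<rangle> + \<langle>u \<odot> pow_deriv k u x, y\<rangle>"
    by (simp add: inner_form.add_left)
  also have "\<dots> = \<langle>x, pow u k \<odot> y\<rangle> + \<langle>pow_deriv k u x, u \<odot> y\<rangle>"
    by (simp only: form_mult_assoc[of x] form_mult_left[of u])
  also have "\<dots> = \<langle>x, y \<odot> pow u k\<rangle> + \<langle>x, u \<odot> pow_deriv k u y\<rangle>"
    by (simp only: Suc.IH pow_deriv_mult_commute mult_commute[of y])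
  also have "\<dots> = \<langle>x, pow_deriv (Suc k) u y\<rangle>"
    by (simp add: inner_form.add_right)
  finally show ?case .
qed

lemma form_one_pow_deriv: "\<langle>\<one>, pow_deriv (Suc k) u y\<rangle> = real (Suc k) * \<langle>pow u k, y\<rangle>"
proof -
  have "\<langle>\<one>, pow_deriv (Suc k) u y\<rangle> = \<langle>y, pow u k\<rangle> + \<langle>u, pow_deriv k u y\<rangle>"
    by (simp add: inner_form.add_right form_one_mult)
  also have "\<dots> = \<langle>pow u k, y\<rangle> + real k * \<langle>pow u k, y\<rangle>"
    by (simp add: form_commute[of y] form_pow_deriv_commute[symmetric] pow_deriv_self
        inner_form.scaleR_left)
  finally show ?thesis
    by (simp add: algebra_simps)
qed

lemma hdens_eq_form_one_pow: "hdens a \<eta> e1 (Suc n) = (\<lambda>u. fact n * \<langle>\<one>, pow u (Suc n)\<rangle>)"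
proof (induction n)
  case 0
  show ?case
    unfolding hdens_1 by simp
next
  case (Suc n)
  show ?case
  proof
    fix u
    have "(hdens a \<eta> e1 (Suc n) has_derivative (\<lambda>y. fact (Suc n) * \<langle>pow u n, y\<rangle>)) (at u)"
      unfolding Suc.IH
      by (rule has_derivative_eq_rhs[OF has_derivative_mult_right[OF bounded_linear.has_derivative[OF
            inner_form.bounded_linear_right has_derivative_pow]]])
        (simp add: fun_eq_iff form_one_pow_deriv del: pow_deriv.simps)
    from hdens_Suc_Suc_eq_derivative[OF this]
    have "hdens a \<eta> e1 (Suc (Suc n)) u = fact (Suc n) * \<langle>\<one>, pow u n \<odot> (u \<odot> u)\<rangle>"
      by (simp add: form_one_mult)
    then show "hdens a \<eta> e1 (Suc (Suc n)) u = fact (Suc n) * \<langle>\<one>, pow u (Suc (Suc n))\<rangle>"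
      by (simp only: mult_commute[of "pow u n"] square_mult_pow)
  qed
qed

lemma pdiff_hdens: "pdiff p (hdens a \<eta> e1 (Suc n)) = (\<lambda>u. fact (Suc n) * \<langle>pow u n, axis p 1\<rangle>)"
proof
  fix u
  have "(hdens a \<eta> e1 (Suc n) has_derivative (\<lambda>y. fact (Suc n) * \<langle>pow u n, y\<rangle>)) (at u)"
    unfolding hdens_eq_form_one_pow
    by (rule has_derivative_eq_rhs[OF has_derivative_mult_right[OF bounded_linear.has_derivative[OF
          inner_form.bounded_linear_right has_derivative_pow]]])
      (simp add: fun_eq_iff form_one_pow_deriv del: pow_deriv.simps)
  then show "pdiff p (hdens a \<eta> e1 (Suc n)) u = fact (Suc n) * \<langle>pow u n, axis p 1\<rangle>"
    by (rule pdiff_eq_derivative)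
qed

lemma conserved_hdens: "conserved_density a (hdens a \<eta> e1 (Suc n))"
proof -
  let ?e = "\<lambda>k. axis k 1 :: real^'n"
  have derivative: "(pdiff p (hdens a \<eta> e1 (Suc n)) has_derivative
      (\<lambda>w. fact (Suc n) * \<langle>pow_deriv n u w, ?e p\<rangle>)) (at u)" for p u
    unfolding pdiff_hdens
    by (rule has_derivative_mult_right[OF bounded_linear.has_derivative[OF
          inner_form.bounded_linear_left has_derivative_pow]])
  have symmetric: "\<langle>pow_deriv n u (u \<odot> ?e k), ?e p\<rangle> = \<langle>pow_deriv n u (u \<odot> ?e p), ?e k\<rangle>" for u k p
  proof -
    have "\<langle>pow_deriv n u (u \<odot> ?e k), ?e p\<rangle> = \<langle>pow_deriv n u (?e k), u \<odot> ?e p\<rangle>"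
      by (simp only: pow_deriv_mult_commute form_mult_left)
    also have "\<dots> = \<langle>pow_deriv n u (u \<odot> ?e p), ?e k\<rangle>"
      by (simp only: form_pow_deriv_commute form_commute[of "?e k"])
    finally show ?thesis .
  qed
  show ?thesis
    by (simp add: conserved_density_iff_derivatives[OF derivative] symmetric)
qed

end

theorem proposition3:
  fixes a :: "'n::finite \<Rightarrow> 'n \<Rightarrow> 'n \<Rightarrow> real" and \<eta> :: "'n \<Rightarrow> 'n \<Rightarrow> real" and e1 :: 'n
  assumes comm: "\<forall>k i j. a k i j = a k j i"
    and unity: "\<forall>k j. a k e1 j = (if k = j then 1 else 0)"
    and sym: "\<forall>i j. \<eta> i j = \<eta> j i"
    and nondeg: "det (\<chi> i j. \<eta> i j) \<noteq> 0"
    and frob: "\<forall>i j k. (\<Sum>l\<in>UNIV. a l i j * \<eta> l k) = (\<Sum>l\<in>UNIV. \<eta> i l * a l j k)"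
  shows "is_jordan a \<longleftrightarrow> (\<forall>n\<ge>1. conserved_density a (hdens a \<eta> e1 n))"
proof -
  interpret frobenius_algebra a e1 \<eta>
    using comm unity sym frob by unfold_locales
  show ?thesis
  proof
    assume "is_jordan a"
    then interpret frobenius_jordan_algebra a e1 \<eta>
      by unfold_locales
    show "\<forall>n\<ge>1. conserved_density a (hdens a \<eta> e1 n)"
      using conserved_hdens by (metis One_nat_def Suc_le_D)
  next
    assume "\<forall>n\<ge>1. conserved_density a (hdens a \<eta> e1 n)"
    then show "is_jordan a"
      using jordan_if_conserved_hdens_4[OF nondeg] by simp
  qed
qed

end
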